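(* Let $\Gamma$ be a metrized graph and $p$ a vertex of $\Gamma$. For an edge $e_i$ of $\Gamma$ with end points $p_i$ and $q_i$, $$r(p_i,p)+r(q_i,p)=2\,r_{\overline{\Gamma}_i}(p,\bar p_i)+\frac{L_i R_i}{L_i+R_i}-2\,\frac{L_i R_{a_i,p} R_{b_i,p}}{R_i(L_i+R_i)}.$$
   Context: A metrized graph $\Gamma$ is a finite connected graph (multiple edges and self-loops allowed) each of whose edges is identified with a closed segment of positive length, with a finite nonempty vertex set $V(\Gamma)$ containing every point of valence $\neq2$; $L_i$ is the length of $e_i$. $r$ (resp. $r_\beta$) is the effective resistance in $\Gamma$ (resp. $\beta$), edges being resistors of resistance equal to length. If $\Gamma-e_i$ (interior of $e_i$ deleted) is connected, $R_i$ is the effective resistance between $p_i,q_i$ in $\Gamma-e_i$, $R_{a_i,p}=\hat j_{p_i}(p,q_i)$, $R_{b_i,p}=\hat j_{q_i}(p,p_i)$ with $\hat j_z(x,y)$ the voltage function of $\Gamma-e_i$ (potential at $x$ when unit current enters at $y$ and exits at $z$, potential $0$ at $z$), so $R_{a_i,p}+R_{b_i,p}=R_i$. If $e_i$ is a bridge, $R_{a_i,p}=0,R_{b_i,p}=R_i$ when $p$ is in the component of $\Gamma-e_i$ containing $p_i$, and $R_{a_i,p}=R_i,R_{b_i,p}=0$ otherwise, and every expression involving $R_i$ is interpreted as its limit as $R_i\to\infty$. $\overline\Gamma_i$ is obtained by contracting $e_i$ to a point (identifying $p_i$ and $q_i$), with vertex set the image of $V(\Gamma)$, and $\bar p_i$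 denotes the vertex into which $p_i$ is contracted; $p$ also denotes its image in $\overline\Gamma_i$. *)

theory Defs
  imports "HOL-Analysis.Analysis"
begin

text \<open>A metrized graph is represented by its model: a finite vertex set V, a finite
  edge index set E, endpoint maps s t (edge e has end points s e, t e), and
  edge lengths L e > 0.  Each edge is a resistor of resistance L e.\<close>

definition adj :: "'e set \<Rightarrow> ('e \<Rightarrow> 'v) \<Rightarrow> ('e \<Rightarrow> 'v) \<Rightarrow> ('v \<times> 'v) set" where
  "adj E s t = {(s e, t e) | e. e \<in> E} \<union> {(t e, s e) | e. e \<in> E}"

definition graph_connected :: "'v set \<Rightarrow> 'e set \<Rightarrow> ('e \<Rightarrow> 'v) \<Rightarrow> ('e \<Rightarrow> 'v) \<Rightarrow> bool" where
  "graph_connected V E s t \<longleftrightarrow> (\<forall>u\<in>V. \<forall>v\<in>V. (u, v) \<in> (adj E s t)\<^sup>*)"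

definition metrized_graph ::
  "'v set \<Rightarrow> 'e set \<Rightarrow> ('e \<Rightarrow> 'v) \<Rightarrow> ('e \<Rightarrow> 'v) \<Rightarrow> ('e \<Rightarrow> real) \<Rightarrow> bool" where
  "metrized_graph V E s t L \<longleftrightarrow> finite V \<and> V \<noteq> {} \<and> finite E \<and>
     (\<forall>e\<in>E. s e \<in> V \<and> t e \<in> V \<and> L e > 0) \<and> graph_connected V E s t"

text \<open>Kirchhoff conditions: unit current enters at y, exits at z, potential 0 at z
  (and, for uniqueness, 0 off the vertex set).\<close>
definition kirchhoff ::
  "'v set \<Rightarrow> 'e set \<Rightarrow> ('e \<Rightarrow> 'v) \<Rightarrow> ('e \<Rightarrow> 'v) \<Rightarrow> ('e \<Rightarrow> real) \<Rightarrow> 'v \<Rightarrow> 'v \<Rightarrow> ('v \<Rightarrow> real) \<Rightarrow> bool" where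
  "kirchhoff V E s t L y z \<phi> \<longleftrightarrow> \<phi> z = 0 \<and> (\<forall>x. x \<notin> V \<longrightarrow> \<phi> x = 0) \<and>
     (\<forall>v\<in>V. (\<Sum>e\<in>{e\<in>E. s e = v}. (\<phi> v - \<phi> (t e)) / L e)
            + (\<Sum>e\<in>{e\<in>E. t e = v}. (\<phi> v - \<phi> (s e)) / L e)
          = (if v = y then 1 else 0) - (if v = z then 1 else 0))"

text \<open>voltage function j_z(x,y): potential at x when unit current enters at y and
  exits at z, with potential 0 at z.\<close>
definition voltage ::
  "'v set \<Rightarrow> 'e set \<Rightarrow> ('e \<Rightarrow> 'v) \<Rightarrow> ('e \<Rightarrow> 'v) \<Rightarrow> ('e \<Rightarrow> real) \<Rightarrow> 'v \<Rightarrow> 'v \<Rightarrow> 'v \<Rightarrow> real" where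
  "voltage V E s t L z x y = (THE \<phi>. kirchhoff V E s t L y z \<phi>) x"

definition eff_res ::
  "'v set \<Rightarrow> 'e set \<Rightarrow> ('e \<Rightarrow> 'v) \<Rightarrow> ('e \<Rightarrow> 'v) \<Rightarrow> ('e \<Rightarrow> real) \<Rightarrow> 'v \<Rightarrow> 'v \<Rightarrow> real" where
  "eff_res V E s t L x y = voltage V E s t L y x x"

definition contr_map :: "'v \<Rightarrow> 'v \<Rightarrow> 'v \<Rightarrow> 'v" where
  "contr_map p q v = (if v = q then p else v)"

end

theory Submission
  imports Defs "HOL-Library.Function_Algebras" "HOL-Real_Asymp.Real_Asymp"
begin

text \<open>Write \<open>H\<close> for \<open>\<Gamma> - e\<^sub>i\<close>, \<open>a\<close>, \<open>b\<close> for the ends of \<open>e\<^sub>i\<close>, and \<open>w\<close> for the potential in \<open>H\<close> of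
  a unit current from \<open>a\<close> to \<open>b\<close>, grounded at \<open>b\<close>; thus \<open>R\<^sub>i = w a\<close>, \<open>R\<^sub>b\<^sub>i\<^sub>,\<^sub>p = w p\<close> and
  \<open>R\<^sub>a\<^sub>i\<^sub>,\<^sub>p = w a - w p\<close>.  When \<open>H\<close> is connected, inserting \<open>e\<^sub>i\<close> is a rank-one update of the
  potentials of \<open>H\<close>: one subtracts the multiple of \<open>w\<close> that carries the current through \<open>e\<^sub>i\<close>,
  which gives \<open>r(x,p) = r\<^sub>H(x,p) - (w x - w p)\<^sup>2 / (L\<^sub>i + R\<^sub>i)\<close>.  Contracting \<open>e\<^sub>i\<close> is the same
  update with \<open>L\<^sub>i = 0\<close>, and reciprocity gives \<open>r\<^sub>H(b,p) = r\<^sub>H(a,p) - R\<^sub>i + 2 w p\<close>; what remains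
  is an algebraic identity.  When \<open>e\<^sub>i\<close> is a bridge, the potential of the contracted graph, pulled
  back to \<open>\<Gamma>\<close>, serves for the end of \<open>e\<^sub>i\<close> on the side of \<open>p\<close>, and raising it by \<open>L\<^sub>i\<close> beyond
  the bridge serves for the other end.  So \<open>r(a,p) + r(b,p)\<close> is twice the resistance in the
  contracted graph plus \<open>L\<^sub>i\<close>, the limit of the right-hand side as \<open>R\<^sub>i \<rightarrow> \<infinity>\<close>.\<close>

definition laplacian ::
  "'e set \<Rightarrow> ('e \<Rightarrow> 'v) \<Rightarrow> ('e \<Rightarrow> 'v) \<Rightarrow> ('e \<Rightarrow> real) \<Rightarrow> ('v \<Rightarrow> real) \<Rightarrow> 'v \<Rightarrow> real" where
  "laplacian E s t L \<phi> v = (\<Sum>e\<in>{e\<in>E. s e = v}. (\<phi> v - \<phi> (t e)) / L e)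
     + (\<Sum>e\<in>{e\<in>E. t e = v}. (\<phi> v - \<phi> (s e)) / L e)"

definition resistor_network ::
  "'v set \<Rightarrow> 'e set \<Rightarrow> ('e \<Rightarrow> 'v) \<Rightarrow> ('e \<Rightarrow> 'v) \<Rightarrow> ('e \<Rightarrow> real) \<Rightarrow> bool" where
  "resistor_network V E s t L \<longleftrightarrow> finite V \<and> finite E \<and> (\<forall>e\<in>E. s e \<in> V \<and> t e \<in> V \<and> L e > 0)"

definition unit_potential ::
  "'v set \<Rightarrow> 'e set \<Rightarrow> ('e \<Rightarrow> 'v) \<Rightarrow> ('e \<Rightarrow> 'v) \<Rightarrow> ('e \<Rightarrow> real) \<Rightarrow> 'v \<Rightarrow> 'v \<Rightarrow> ('v \<Rightarrow> real) \<Rightarrow> bool" where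
  "unit_potential V E s t L y z \<phi> \<longleftrightarrow> \<phi> z = 0 \<and>
     (\<forall>v\<in>V. laplacian E s t L \<phi> v = (if v = y then 1 else 0) - (if v = z then 1 else 0))"

lemma resistor_networkD:
  assumes "resistor_network V E s t L"
  shows "finite V" "finite E" "e \<in> E \<Longrightarrow> s e \<in> V" "e \<in> E \<Longrightarrow> t e \<in> V" "e \<in> E \<Longrightarrow> L e > 0"
  using assms unfolding resistor_network_def by auto

subsection \<open>The Laplacian\<close>

lemma laplacian_green:
  assumes "resistor_network V E s t L"
  shows "(\<Sum>v\<in>V. \<psi> v * laplacian E s t L \<phi> v)
       = (\<Sum>e\<in>E. (\<psi> (s e) - \<psi> (t e)) * (\<phi> (s e) - \<phi> (t e)) / L e)"
proof -
  note N = resistor_networkD[OF assms]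
  have group: "(\<Sum>v\<in>V. \<Sum>e\<in>{e\<in>E. h e = v}. F e) = (\<Sum>e\<in>E. F e :: real)"
    if "\<And>e. e \<in> E \<Longrightarrow> h e \<in> V" for h F
    using sum.group[of E V h F] N(1,2) that by auto
  have "(\<Sum>v\<in>V. \<psi> v * laplacian E s t L \<phi> v)
      = (\<Sum>v\<in>V. \<Sum>e\<in>{e\<in>E. s e = v}. \<psi> (s e) * ((\<phi> (s e) - \<phi> (t e)) / L e))
      + (\<Sum>v\<in>V. \<Sum>e\<in>{e\<in>E. t e = v}. \<psi> (t e) * ((\<phi> (t e) - \<phi> (s e)) / L e))"
    unfolding laplacian_def distrib_left sum_distrib_left sum.distrib[symmetric]
    by (intro sum.cong arg_cong2[where f = "(+)"]) auto
  also have "\<dots> = (\<Sum>e\<in>E. \<psi> (s e) * ((\<phi> (s e) - \<phi> (t e)) / L e))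
      + (\<Sum>e\<in>E. \<psi> (t e) * ((\<phi> (t e) - \<phi> (s e)) / L e))"
    using N(3,4) by (simp only: group)
  also have "\<dots> = (\<Sum>e\<in>E. (\<psi> (s e) - \<psi> (t e)) * (\<phi> (s e) - \<phi> (t e)) / L e)"
    unfolding sum.distrib[symmetric]
    by (intro sum.cong) (simp_all add: add_divide_distrib[symmetric] algebra_simps)
  finally show ?thesis .
qed

lemma laplacian_affine:
  "laplacian E s t L (\<lambda>x. \<alpha> * f x + \<beta> * g x + k) v
     = \<alpha> * laplacian E s t L f v + \<beta> * laplacian E s t L g v"
proof -
  have "(\<Sum>e\<in>A. (\<alpha> * f v + \<beta> * g v + k - (\<alpha> * f (h e) + \<beta> * g (h e) + k)) / L e)
     = \<alpha> * (\<Sum>e\<in>A. (f v - f (h e)) / L e) + \<beta> * (\<Sum>e\<in>A. (g v - g (h e)) / L e)" for A h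
    unfolding sum_distrib_left sum.distrib[symmetric]
    by (intro sum.cong) (simp_all add: add_divide_distrib[symmetric] algebra_simps)
  then show ?thesis unfolding laplacian_def by (simp add: algebra_simps)
qed

lemma laplacian_diff:
  "laplacian E s t L (\<lambda>x. f x - g x) v = laplacian E s t L f v - laplacian E s t L g v"
  using laplacian_affine[of E s t L 1 f "-1" g 0 v] by simp

lemma laplacian_cong:
  assumes "v \<in> V" "\<And>e. e \<in> E \<Longrightarrow> s e \<in> V \<and> t e \<in> V" "\<And>x. x \<in> V \<Longrightarrow> f x = g x"
  shows "laplacian E s t L f v = laplacian E s t L g v"
  unfolding laplacian_def using assms by (intro arg_cong2[where f = "(+)"] sum.cong) auto

lemma laplacian_edge_constant:
  assumes "\<And>e. e \<in> E \<Longrightarrow> \<phi> (s e) = \<phi> (t e)"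
  shows "laplacian E s t L \<phi> v = 0"
  unfolding laplacian_def using assms by (auto intro!: sum.neutral)

lemma laplacian_sum_closed:
  assumes N: "resistor_network V E s t L" and "X \<subseteq> V"
    and closed: "\<And>e. e \<in> E \<Longrightarrow> s e \<in> X \<longleftrightarrow> t e \<in> X"
  shows "(\<Sum>v\<in>X. laplacian E s t L \<phi> v) = 0"
proof -
  have "(\<Sum>v\<in>X. laplacian E s t L \<phi> v) = (\<Sum>v\<in>V. if v \<in> X then laplacian E s t L \<phi> v else 0)"
    using \<open>X \<subseteq> V\<close> sum.inter_restrict[OF resistor_networkD(1)[OF N]] by (metis Int_absorb1)
  also have "\<dots> = (\<Sum>v\<in>V. of_bool (v \<in> X) * laplacian E s t L \<phi> v)"
    by (intro sum.cong) auto
  also have "\<dots> = 0"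
    unfolding laplacian_green[OF N] using closed by (intro sum.neutral) auto
  finally show ?thesis .
qed

lemma laplacian_eq_minus_sum_others:
  assumes "resistor_network V E s t L" "z \<in> V"
  shows "laplacian E s t L \<phi> z = - (\<Sum>v\<in>V - {z}. laplacian E s t L \<phi> v)"
  using laplacian_sum_closed[OF assms(1) order_refl, of \<phi>] assms resistor_networkD[OF assms(1)]
  by (simp add: sum.remove eq_neg_iff_add_eq_0)

lemma dirichlet_energy_nonneg:
  assumes "resistor_network V E s t L"
  shows "(\<Sum>v\<in>V. \<phi> v * laplacian E s t L \<phi> v) \<ge> 0"
  unfolding laplacian_green[OF assms]
  by (intro sum_nonneg divide_nonneg_pos) (auto intro: resistor_networkD(5)[OF assms])

lemma dirichlet_energy_eq_0_imp_edge_constant: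
  assumes N: "resistor_network V E s t L" and "(\<Sum>v\<in>V. \<phi> v * laplacian E s t L \<phi> v) = 0"
    and "e \<in> E"
  shows "\<phi> (s e) = \<phi> (t e)"
proof -
  have "(\<Sum>e\<in>E. (\<phi> (s e) - \<phi> (t e)) * (\<phi> (s e) - \<phi> (t e)) / L e) = 0"
    using assms(2) unfolding laplacian_green[OF N] .
  then have "(\<phi> (s e) - \<phi> (t e)) * (\<phi> (s e) - \<phi> (t e)) / L e = 0"
    using \<open>e \<in> E\<close> resistor_networkD[OF N]
    by (subst (asm) sum_nonneg_eq_0_iff) (auto intro!: divide_nonneg_pos)
  then show ?thesis using resistor_networkD(5)[OF N \<open>e \<in> E\<close>] by simp
qed

lemma rtrancl_adj_edge_constant:
  assumes "(u, v) \<in> (adj E s t)\<^sup>*" "\<And>e. e \<in> E \<Longrightarrow> f (s e) = f (t e)"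
  shows "f u = f v"
  using assms(1) by induction (use assms(2) in \<open>auto simp: adj_def\<close>)

lemma harmonic_imp_constant:
  assumes N: "resistor_network V E s t L" and "graph_connected V E s t"
    and "\<And>v. v \<in> V \<Longrightarrow> laplacian E s t L \<phi> v = 0" and "u \<in> V" "v \<in> V"
  shows "\<phi> u = \<phi> v"
proof (rule rtrancl_adj_edge_constant[where f = \<phi>])
  show "(u, v) \<in> (adj E s t)\<^sup>*" using assms(2,4,5) unfolding graph_connected_def by blast
  have "(\<Sum>v\<in>V. \<phi> v * laplacian E s t L \<phi> v) = 0" using assms(3) by simp
  then show "\<phi> (s e) = \<phi> (t e)" if "e \<in> E" for e
    using dirichlet_energy_eq_0_imp_edge_constant[OF N _ that] by blast
qed

lemma laplacian_eq_imp_eq_on_vertices: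
  assumes N: "resistor_network V E s t L" and C: "graph_connected V E s t" and "z \<in> V"
    and "f z = h z" "\<And>v. v \<in> V - {z} \<Longrightarrow> laplacian E s t L f v = laplacian E s t L h v"
    and "x \<in> V"
  shows "f x = h x"
proof -
  have "laplacian E s t L (\<lambda>x. f x - h x) v = 0" if "v \<in> V - {z}" for v
    using assms(5)[OF that] unfolding laplacian_diff by simp
  then have "laplacian E s t L (\<lambda>x. f x - h x) v = 0" if "v \<in> V" for v
    using laplacian_eq_minus_sum_others[OF N \<open>z \<in> V\<close>, of "\<lambda>x. f x - h x"] that
    by (cases "v = z") auto
  from harmonic_imp_constant[OF N C this \<open>x \<in> V\<close> \<open>z \<in> V\<close>] \<open>f z = h z\<close> show ?thesis by simp
qed

subsection \<open>Existence of unit potentials\<close>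

lemma (in vector_space) span_subset_span_independent:
  assumes "finite B" "independent A" "A \<subseteq> span B" "card B \<le> card A"
  shows "span B \<subseteq> span A"
proof (rule span_minimal[OF _ subspace_span], rule subsetI, rule ccontr)
  fix x assume "x \<in> B" "x \<notin> span A"
  have indep: "independent (insert x A)"
    by (rule independent_insertI[OF \<open>x \<notin> span A\<close> assms(2)])
  have "x \<notin> A" using \<open>x \<notin> span A\<close> span_base by blast
  have "insert x A \<subseteq> span B"
    using assms(3) span_base[OF \<open>x \<in> B\<close>] by blast
  from independent_span_bound[OF assms(1) indep this]
  have "finite A" "Suc (card A) \<le> card B" using \<open>x \<notin> A\<close> by auto
  with assms(4) show False by simp
qed

lemma (in vector_space) linear_inj_on_span_imp_surj_on:
  assumes lin: "Vector_Spaces.linear scale scale f" and "finite B"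
    and into: "f ` span B \<subseteq> span B" and inj: "inj_on f (span B)"
  shows "f ` span B = span B"
proof -
  have hom: "module_hom scale scale f" using module_hom_linearI[OF lin] .
  obtain C where C: "C \<subseteq> span B" "independent C" "span B \<subseteq> span C" "card C = dim (span B)"
    by (rule basis_exists)
  have fin: "finite C"
    using independent_span_bound[OF \<open>finite B\<close> C(2,1)] by (rule conjunct1)
  have CB: "span C = span B"
    using span_minimal[OF C(1) subspace_span] C(3) by (rule subset_antisym)
  have indep: "independent (f ` C)"
    by (rule module_hom.independent_injective_image[OF hom C(2)]) (simp add: CB inj)
  have "f ` C \<subseteq> span C"
    using image_mono[OF C(1), of f] into unfolding CB by (rule order_trans)
  then have "span C \<subseteq> span (f ` C)"
    by (rule span_subset_span_independent[OF fin indep])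
       (simp add: card_image[OF inj_on_subset[OF inj C(1)]])
  also have "span (f ` C) = f ` span B"
    unfolding module_hom.span_image[OF hom] CB ..
  finally show ?thesis using into CB by (intro subset_antisym) simp_all
qed

text \<open>Real-valued functions on an arbitrary type have no \<open>real_vector\<close> instance; this
  interpretation provides span and dimension for them.\<close>
definition fun_scale :: "real \<Rightarrow> ('a \<Rightarrow> real) \<Rightarrow> 'a \<Rightarrow> real" where
  "fun_scale c f = (\<lambda>x. c * f x)"

interpretation fun_space: vector_space fun_scale
  by unfold_locales (auto simp: fun_scale_def algebra_simps fun_eq_iff)

lemma sum_fun_apply: "(\<Sum>a\<in>A. f a) x = (\<Sum>a\<in>A. f a x)" for f :: "'a \<Rightarrow> 'b \<Rightarrow> real"
  by (induction A rule: infinite_finite_induct) auto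

lemma fun_space_span_indicators:
  assumes "finite W"
  shows "fun_space.span ((\<lambda>w x. if x = w then 1 else 0) ` W) = {f. \<forall>x. x \<notin> W \<longrightarrow> f x = 0}"
    (is "fun_space.span ?B = ?S")
proof
  show "fun_space.span ?B \<subseteq> ?S"
    by (rule fun_space.span_minimal) (auto simp: fun_scale_def intro!: fun_space.subspaceI)
  show "?S \<subseteq> fun_space.span ?B"
  proof
    fix f assume "f \<in> ?S"
    have "(\<Sum>w\<in>W. fun_scale (f w) (\<lambda>x. if x = w then 1 else 0)) x = f x" for x
    proof -
      have "(\<Sum>w\<in>W. fun_scale (f w) (\<lambda>x. if x = w then 1 else 0)) x = (\<Sum>w\<in>W. if x = w then f x else 0)"
        unfolding sum_fun_apply fun_scale_def by (intro sum.cong) auto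
      also have "\<dots> = f x" using assms \<open>f \<in> ?S\<close> by (simp add: sum.delta')
      finally show ?thesis .
    qed
    then have "f = (\<Sum>w\<in>W. fun_scale (f w) (\<lambda>x. if x = w then 1 else 0))" by auto
    also have "\<dots> \<in> fun_space.span ?B"
      by (intro fun_space.span_sum fun_space.span_scale fun_space.span_base) auto
    finally show "f \<in> fun_space.span ?B" .
  qed
qed

definition grounded_laplacian ::
  "'e set \<Rightarrow> ('e \<Rightarrow> 'v) \<Rightarrow> ('e \<Rightarrow> 'v) \<Rightarrow> ('e \<Rightarrow> real) \<Rightarrow> 'v set \<Rightarrow> ('v \<Rightarrow> real) \<Rightarrow> 'v \<Rightarrow> real" where
  "grounded_laplacian E s t L W f v = (if v \<in> W then laplacian E s t L f v else 0)"

lemma linear_grounded_laplacian: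
  "Vector_Spaces.linear fun_scale fun_scale (grounded_laplacian E s t L W)"
  unfolding Vector_Spaces.linear_iff
proof (intro conjI allI)
  show "vector_space fun_scale" by (rule fun_space.vector_space_axioms)
  then show "vector_space fun_scale" .
  fix f h :: "'a \<Rightarrow> real" and c
  show "grounded_laplacian E s t L W (f + h) = grounded_laplacian E s t L W f + grounded_laplacian E s t L W h"
    using laplacian_affine[of E s t L 1 f 1 h 0]
    by (auto simp: grounded_laplacian_def fun_eq_iff plus_fun_def)
  show "grounded_laplacian E s t L W (fun_scale c f) = fun_scale c (grounded_laplacian E s t L W f)"
    using laplacian_affine[of E s t L c f 0 h 0]
    by (auto simp: grounded_laplacian_def fun_eq_iff fun_scale_def)
qed

text \<open>The grounded Laplacian is injective on functions vanishing outside \<open>V - {z}\<close>, hence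
  surjective onto them by counting dimensions.\<close>
lemma grounded_laplacian_surj:
  fixes V :: "'v set"
  assumes N: "resistor_network V E s t L" and C: "graph_connected V E s t" and "z \<in> V"
  shows "\<exists>\<phi>. \<phi> z = 0 \<and> (\<forall>v\<in>V - {z}. laplacian E s t L \<phi> v = g v)"
proof -
  define B where "B = (\<lambda>w x. if x = w then 1 else 0 :: real) ` (V - {z})"
  let ?M = "grounded_laplacian E s t L (V - {z})"
  have "finite (V - {z})" using resistor_networkD(1)[OF N] by simp
  then have span: "fun_space.span B = {f. \<forall>x. x \<notin> V - {z} \<longrightarrow> f x = 0}"
    unfolding B_def by (rule fun_space_span_indicators)
  have inj: "inj_on ?M (fun_space.span B)"
  proof (rule inj_onI, rule ext)
    fix f h x assume fh: "f \<in> fun_space.span B" "h \<in> fun_space.span B" "?M f = ?M h"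
    have "f z = h z" using fh(1,2) unfolding span by simp
    moreover have "laplacian E s t L f v = laplacian E s t L h v" if "v \<in> V - {z}" for v
      using fun_cong[OF fh(3), of v] that unfolding grounded_laplacian_def by simp
    ultimately show "f x = h x"
      using laplacian_eq_imp_eq_on_vertices[OF N C \<open>z \<in> V\<close>, of f h x] fh(1,2)
      unfolding span by (cases "x \<in> V") auto
  qed
  have into: "?M ` fun_space.span B \<subseteq> fun_space.span B"
    unfolding span grounded_laplacian_def by auto
  have "finite B" unfolding B_def using \<open>finite (V - {z})\<close> by simp
  then have surj: "?M ` fun_space.span B = fun_space.span B"
    by (rule fun_space.linear_inj_on_span_imp_surj_on[OF linear_grounded_laplacian _ into inj])
  have "(\<lambda>v. if v \<in> V - {z} then g v else 0) \<in> fun_space.span B" unfolding span by simp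
  then have "(\<lambda>v. if v \<in> V - {z} then g v else 0) \<in> ?M ` fun_space.span B" unfolding surj .
  then obtain \<phi> where \<phi>: "(\<lambda>v. if v \<in> V - {z} then g v else 0) = ?M \<phi>" "\<phi> \<in> fun_space.span B"
    by (rule imageE)
  have "\<phi> z = 0" using \<phi>(2) unfolding span by simp
  moreover have "laplacian E s t L \<phi> v = g v" if "v \<in> V - {z}" for v
    using fun_cong[OF \<phi>(1), of v] that unfolding grounded_laplacian_def by simp
  ultimately show ?thesis by blast
qed

lemma unit_potential_exists:
  assumes N: "resistor_network V E s t L" and C: "graph_connected V E s t"
    and "y \<in> V" "z \<in> V"
  shows "\<exists>\<phi>. unit_potential V E s t L y z \<phi>"
proof -
  obtain \<phi> where \<phi>: "\<phi> z = 0" "\<And>v. v \<in> V - {z} \<Longrightarrow> laplacian E s t L \<phi> v = (if v = y then 1 else 0)"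
    using grounded_laplacian_surj[OF N C \<open>z \<in> V\<close>, of "\<lambda>v. if v = y then 1 else 0"] by blast
  have "laplacian E s t L \<phi> z = - (\<Sum>v\<in>V - {z}. if v = y then 1 else 0)"
    using laplacian_eq_minus_sum_others[OF N \<open>z \<in> V\<close>] \<phi>(2) by simp
  also have "\<dots> = (if y = z then 0 else -1)"
    using \<open>y \<in> V\<close> resistor_networkD(1)[OF N] by simp
  finally show ?thesis using \<phi> unfolding unit_potential_def by auto
qed

subsection \<open>Reciprocity and effective resistance\<close>

lemma unit_potential_zero: "unit_potential V E s t L a a (\<lambda>_. 0)"
  unfolding unit_potential_def laplacian_def by simp

lemma unit_potential_swap:
  assumes "unit_potential V E s t L y z w"
  shows "unit_potential V E s t L z y (\<lambda>x. w y - w x)"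
  using assms laplacian_affine[of E s t L "-1" w 0 w "w y"] unfolding unit_potential_def by auto

lemma unit_potential_pairing:
  assumes "finite V" "y \<in> V" "z \<in> V" "unit_potential V E s t L y z f"
  shows "(\<Sum>v\<in>V. h v * laplacian E s t L f v) = h y - h z"
proof -
  have "(\<Sum>v\<in>V. h v * laplacian E s t L f v)
      = (\<Sum>v\<in>V. if v = y then h v else 0) - (\<Sum>v\<in>V. if v = z then h v else 0)"
    using assms(4) unfolding unit_potential_def sum_subtractf[symmetric] by (intro sum.cong) auto
  also have "\<dots> = h y - h z" using assms(1-3) by simp
  finally show ?thesis .
qed

lemma unit_potential_reciprocity:
  assumes N: "resistor_network V E s t L" and "y \<in> V" "z \<in> V" "y' \<in> V" "z' \<in> V"
    and "unit_potential V E s t L y z f" "unit_potential V E s t L y' z' h"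
  shows "h y - h z = f y' - f z'"
proof -
  have "h y - h z = (\<Sum>v\<in>V. h v * laplacian E s t L f v)"
    using unit_potential_pairing[OF resistor_networkD(1)[OF N] assms(2,3,6)] by simp
  also have "\<dots> = (\<Sum>v\<in>V. f v * laplacian E s t L h v)"
    unfolding laplacian_green[OF N] by (simp add: mult.commute)
  also have "\<dots> = f y' - f z'"
    using unit_potential_pairing[OF resistor_networkD(1)[OF N] assms(4,5,7)] .
  finally show ?thesis .
qed

lemma unit_potential_source_nonneg:
  assumes N: "resistor_network V E s t L" and "y \<in> V" "z \<in> V" "unit_potential V E s t L y z f"
  shows "f y \<ge> 0"
  using dirichlet_energy_nonneg[OF N, of f] unit_potential_pairing[OF resistor_networkD(1)[OF N] assms(2-4)]
    assms(4) unfolding unit_potential_def by simp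

lemma unit_potential_source_pos:
  assumes N: "resistor_network V E s t L" and "y \<in> V" "z \<in> V" "y \<noteq> z"
    and f: "unit_potential V E s t L y z f"
  shows "f y > 0"
proof (rule ccontr)
  assume "\<not> f y > 0"
  then have "(\<Sum>v\<in>V. f v * laplacian E s t L f v) = 0"
    using unit_potential_source_nonneg[OF N assms(2,3) f]
      unit_potential_pairing[OF resistor_networkD(1)[OF N] assms(2,3) f] f
    unfolding unit_potential_def by simp
  then have "laplacian E s t L f y = 0"
    using dirichlet_energy_eq_0_imp_edge_constant[OF N] by (intro laplacian_edge_constant) blast
  with f \<open>y \<in> V\<close> \<open>y \<noteq> z\<close> show False unfolding unit_potential_def by simp
qed

lemma unit_potential_unique:
  assumes N: "resistor_network V E s t L" and C: "graph_connected V E s t" and "z \<in> V" "x \<in> V"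
    and "unit_potential V E s t L y z \<phi>" "unit_potential V E s t L y z \<psi>"
  shows "\<phi> x = \<psi> x"
  using laplacian_eq_imp_eq_on_vertices[OF N C \<open>z \<in> V\<close> _ _ \<open>x \<in> V\<close>] assms(5,6)
  unfolding unit_potential_def by simp

lemma kirchhoff_iff_unit_potential:
  "kirchhoff V E s t L y z \<phi> \<longleftrightarrow> unit_potential V E s t L y z \<phi> \<and> (\<forall>x. x \<notin> V \<longrightarrow> \<phi> x = 0)"
  unfolding kirchhoff_def unit_potential_def laplacian_def by blast

lemma voltage_eq:
  assumes N: "resistor_network V E s t L" and C: "graph_connected V E s t" and "z \<in> V" "x \<in> V"
    and \<phi>: "unit_potential V E s t L y z \<phi>"
  shows "voltage V E s t L z x y = \<phi> x"
proof -
  define K where "K x = (if x \<in> V then \<phi> x else 0)" for x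
  have "unit_potential V E s t L y z K"
  proof -
    have "laplacian E s t L K v = laplacian E s t L \<phi> v" if "v \<in> V" for v
      using that resistor_networkD(3,4)[OF N] by (intro laplacian_cong[of _ V]) (auto simp: K_def)
    then show ?thesis using \<phi> \<open>z \<in> V\<close> unfolding unit_potential_def K_def by simp
  qed
  then have K: "kirchhoff V E s t L y z K" unfolding kirchhoff_iff_unit_potential K_def by simp
  have "(THE \<psi>. kirchhoff V E s t L y z \<psi>) = K"
  proof (rule the_equality)
    show "kirchhoff V E s t L y z K" by (rule K)
  next
    fix \<psi> assume "kirchhoff V E s t L y z \<psi>"
    with K show "\<psi> = K"
      unfolding kirchhoff_iff_unit_potential
      using unit_potential_unique[OF N C \<open>z \<in> V\<close>] by (metis ext)
  qed
  then show ?thesis unfolding voltage_def K_def using \<open>x \<in> V\<close> by simp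
qed

lemma eff_res_eq:
  assumes "resistor_network V E s t L" "graph_connected V E s t" "x \<in> V" "y \<in> V"
    and "unit_potential V E s t L x y \<phi>"
  shows "eff_res V E s t L x y = \<phi> x"
  unfolding eff_res_def using voltage_eq[OF assms(1,2,4,3,5)] .

lemma eff_res_commute:
  assumes N: "resistor_network V E s t L" and C: "graph_connected V E s t" and "x \<in> V" "y \<in> V"
  shows "eff_res V E s t L x y = eff_res V E s t L y x"
proof -
  obtain f where f: "unit_potential V E s t L x y f"
    using unit_potential_exists[OF N C assms(3,4)] by blast
  have "eff_res V E s t L y x = f x - f y"
    using eff_res_eq[OF N C assms(4,3) unit_potential_swap[OF f]] .
  also have "\<dots> = eff_res V E s t L x y"
    using f eff_res_eq[OF N C assms(3,4) f] unfolding unit_potential_def by simp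
  finally show ?thesis ..
qed

subsection \<open>Connectivity after deleting or contracting an edge\<close>

lemma resistor_network_subset:
  "resistor_network V E s t L \<Longrightarrow> E' \<subseteq> E \<Longrightarrow> resistor_network V E' s t L"
  unfolding resistor_network_def by (auto dest: finite_subset)

lemma resistor_network_contract:
  assumes "resistor_network V E s t L"
  shows "resistor_network (contr_map a b ` V) E (contr_map a b \<circ> s) (contr_map a b \<circ> t) L"
  using assms unfolding resistor_network_def by auto

lemma sym_adj: "sym (adj E s t)"
  unfolding adj_def sym_def by auto

lemma rtrancl_adj_commute: "(u, v) \<in> (adj E s t)\<^sup>* \<Longrightarrow> (v, u) \<in> (adj E s t)\<^sup>*"
  using sym_rtrancl[OF sym_adj] by (rule symD)

lemma rtrancl_adj_ends_iff:
  assumes "e \<in> E"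
  shows "(x, s e) \<in> (adj E s t)\<^sup>* \<longleftrightarrow> (x, t e) \<in> (adj E s t)\<^sup>*"
  using assms rtrancl_into_rtrancl[of x _ "adj E s t"] unfolding adj_def by blast

lemma graph_connected_mono:
  assumes "graph_connected V E' s t" "E' \<subseteq> E"
  shows "graph_connected V E s t"
proof -
  have "adj E' s t \<subseteq> adj E s t" using assms(2) unfolding adj_def by blast
  then have "(adj E' s t)\<^sup>* \<subseteq> (adj E s t)\<^sup>*" by (rule rtrancl_mono)
  then show ?thesis using assms(1) unfolding graph_connected_def by blast
qed

lemma graph_connected_remove_edge:
  assumes "graph_connected V E s t" "e \<in> E" "(s e, t e) \<in> (adj (E - {e}) s t)\<^sup>*"
  shows "graph_connected V (E - {e}) s t"
proof -
  have "adj E s t \<subseteq> (adj (E - {e}) s t)\<^sup>*"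
    using assms(3) rtrancl_adj_commute[OF assms(3)] unfolding adj_def by blast
  then have "(adj E s t)\<^sup>* \<subseteq> (adj (E - {e}) s t)\<^sup>*" by (rule rtrancl_subset_rtrancl)
  then show ?thesis using assms(1) unfolding graph_connected_def by blast
qed

lemma contr_map_same: "contr_map a a = (\<lambda>v. v)"
  unfolding contr_map_def by auto

lemma graph_connected_contract:
  assumes "graph_connected V E s t" "e \<in> E"
  defines "c \<equiv> contr_map (s e) (t e)"
  shows "graph_connected (c ` V) (E - {e}) (c \<circ> s) (c \<circ> t)"
proof -
  have "(c u, c v) \<in> (adj (E - {e}) (c \<circ> s) (c \<circ> t))\<^sup>*" if "(u, v) \<in> (adj E s t)\<^sup>*" for u v
    using that
  proof induction
    case (step y z)
    from step(2) obtain e' where "e' \<in> E" "(y, z) = (s e', t e') \<or> (y, z) = (t e', s e')"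
      unfolding adj_def by auto
    then have "c y = c z \<or> (c y, c z) \<in> adj (E - {e}) (c \<circ> s) (c \<circ> t)"
      unfolding adj_def c_def contr_map_def by (cases "e' = e") auto
    then show ?case using step(3) by (metis rtrancl_into_rtrancl)
  qed simp
  then show ?thesis using assms(1) unfolding graph_connected_def by blast
qed

subsection \<open>Potentials after inserting or contracting an edge\<close>

lemma laplacian_remove_edge:
  assumes "finite E" "e \<in> E"
  shows "laplacian E s t L \<phi> v = laplacian (E - {e}) s t L \<phi> v
     + (\<phi> (s e) - \<phi> (t e)) / L e * ((if v = s e then 1 else 0) - (if v = t e then 1 else 0))"
proof -
  have split: "(\<Sum>x\<in>{x\<in>E. h x = v}. F x)
      = (\<Sum>x\<in>{x\<in>E - {e}. h x = v}. F x) + (if h e = v then F e else 0)" for h and F :: "_ \<Rightarrow> real"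
  proof -
    have "{x\<in>E. h x = v} = (if h e = v then insert e {x\<in>E - {e}. h x = v} else {x\<in>E - {e}. h x = v})"
      using assms(2) by auto
    then show ?thesis using assms(1) by simp
  qed
  show ?thesis
    unfolding laplacian_def split by (auto simp: diff_divide_distrib)
qed

lemma unit_potential_insert_edge_equal_ends:
  assumes "finite E" "e \<in> E" "\<phi> (s e) = \<phi> (t e)" "unit_potential V (E - {e}) s t L y z \<phi>"
  shows "unit_potential V E s t L y z \<phi>"
  using assms unfolding unit_potential_def laplacian_remove_edge[OF assms(1,2)] by simp

text \<open>Rank-one update: the current \<open>I\<close> through the new edge is carried in \<open>E - {e}\<close>
  by the potential \<open>w\<close> of a unit current from one end of \<open>e\<close> to the other.\<close>
lemma unit_potential_insert_edge:
  assumes "finite E" "e \<in> E" "L e > 0" "w (s e) \<ge> 0"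
    and u: "unit_potential V (E - {e}) s t L y z u"
    and w: "unit_potential V (E - {e}) s t L (s e) (t e) w"
  shows "unit_potential V E s t L y z
           (\<lambda>x. u x - (u (s e) - u (t e)) / (L e + w (s e)) * (w x - w z))"
proof -
  define I where "I = (u (s e) - u (t e)) / (L e + w (s e))"
  define \<phi> where "\<phi> x = u x - I * (w x - w z)" for x
  have "I * (L e + w (s e)) = u (s e) - u (t e)"
    using assms(3,4) unfolding I_def by simp
  moreover have "\<phi> (s e) - \<phi> (t e) = u (s e) - u (t e) - I * w (s e)"
    using w unfolding \<phi>_def unit_potential_def by (simp add: algebra_simps)
  ultimately have "\<phi> (s e) - \<phi> (t e) = I * L e"
    unfolding distrib_left by linarith
  then have current: "(\<phi> (s e) - \<phi> (t e)) / L e = I"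
    using assms(3) by (simp add: algebra_simps)
  have lap: "laplacian (E - {e}) s t L \<phi> v
      = laplacian (E - {e}) s t L u v - I * laplacian (E - {e}) s t L w v" for v
    using laplacian_affine[of "E - {e}" s t L 1 u "- I" w "I * w z" v]
    unfolding \<phi>_def by (simp add: algebra_simps)
  have "unit_potential V E s t L y z \<phi>"
    unfolding unit_potential_def
  proof (intro conjI ballI)
    show "\<phi> z = 0" using u unfolding \<phi>_def unit_potential_def by simp
    fix v assume "v \<in> V"
    then show "laplacian E s t L \<phi> v = (if v = y then 1 else 0) - (if v = z then 1 else 0)"
      using u w unfolding unit_potential_def laplacian_remove_edge[OF assms(1,2)] current lap
      by simp
  qed
  then show ?thesis unfolding \<phi>_def I_def .
qed

lemma unit_potential_shift_across_bridge:
  assumes "finite E" "e \<in> E" "L e > 0"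
    and X: "\<And>e'. e' \<in> E - {e} \<Longrightarrow> s e' \<in> X \<longleftrightarrow> t e' \<in> X"
    and ends: "x\<^sub>0 \<in> X" "y\<^sub>0 \<notin> X" "{x\<^sub>0, y\<^sub>0} = {s e, t e}" and "p \<notin> X"
    and \<phi>: "unit_potential V (E - {e}) s t L y\<^sub>0 p \<phi>" "\<phi> (s e) = \<phi> (t e)"
  shows "unit_potential V E s t L x\<^sub>0 p (\<lambda>x. \<phi> x + L e * of_bool (x \<in> X))"
proof -
  let ?\<phi>' = "\<lambda>x. \<phi> x + L e * of_bool (x \<in> X)"
  have "laplacian (E - {e}) s t L (\<lambda>x. of_bool (x \<in> X)) v = 0" for v
    using X by (intro laplacian_edge_constant) auto
  then have lap: "laplacian (E - {e}) s t L ?\<phi>' v = laplacian (E - {e}) s t L \<phi> v" for v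
    using laplacian_affine[of "E - {e}" s t L 1 \<phi> "L e" "\<lambda>x. of_bool (x \<in> X)" 0 v] by simp
  have current: "(?\<phi>' (s e) - ?\<phi>' (t e)) / L e * ((if v = s e then 1 else 0) - (if v = t e then 1 else 0))
      = (if v = x\<^sub>0 then 1 else 0) - (if v = y\<^sub>0 then 1 else 0)" for v
    using ends \<phi>(2) \<open>L e > 0\<close> by (auto simp: doubleton_eq_iff)
  show ?thesis
    using \<phi>(1) \<open>p \<notin> X\<close>
    unfolding unit_potential_def laplacian_remove_edge[OF assms(1,2)] lap current by simp
qed

lemma laplacian_contract:
  assumes "finite E" "a \<noteq> b" "v \<noteq> b"
  shows "laplacian E (contr_map a b \<circ> s) (contr_map a b \<circ> t) L \<psi> v =
    (if v = a then laplacian E s t L (\<psi> \<circ> contr_map a b) a + laplacian E s t L (\<psi> \<circ> contr_map a b) b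
     else laplacian E s t L (\<psi> \<circ> contr_map a b) v)"
proof (cases "v = a")
  case True
  have "{e\<in>E. contr_map a b (h e) = a} = {e\<in>E. h e = a} \<union> {e\<in>E. h e = b}" for h :: "_ \<Rightarrow> _"
    unfolding contr_map_def by auto
  then have "(\<Sum>e\<in>{e\<in>E. contr_map a b (h e) = a}. F e)
      = (\<Sum>e\<in>{e\<in>E. h e = a}. F e) + (\<Sum>e\<in>{e\<in>E. h e = b}. F e :: real)" for h F
    using assms(1,2) by (simp add: sum.union_disjoint disjoint_iff)
  moreover have "contr_map a b a = a" "contr_map a b b = a" unfolding contr_map_def by auto
  ultimately show ?thesis unfolding laplacian_def True by simp
next
  case False
  then have "{e\<in>E. contr_map a b (h e) = v} = {e\<in>E. h e = v}" "contr_map a b v = v"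
    for h :: "_ \<Rightarrow> _"
    using assms(3) unfolding contr_map_def by auto
  then show ?thesis unfolding laplacian_def using False by simp
qed

lemma unit_potential_contract:
  assumes "finite E" "a \<noteq> b" "\<phi> a = 0" "\<phi> b = 0"
    and away: "\<And>v. v \<in> V \<Longrightarrow> v \<noteq> a \<Longrightarrow> v \<noteq> b \<Longrightarrow> laplacian E s t L \<phi> v = (if v = p then 1 else 0)"
    and glued: "laplacian E s t L \<phi> a + laplacian E s t L \<phi> b = (if p = a \<or> p = b then 1 else 0) - 1"
  shows "unit_potential (contr_map a b ` V) E (contr_map a b \<circ> s) (contr_map a b \<circ> t) L
           (contr_map a b p) a \<phi>"
  unfolding unit_potential_def
proof (intro conjI ballI)
  have \<phi>: "\<phi> \<circ> contr_map a b = \<phi>" using assms(3,4) by (auto simp: fun_eq_iff contr_map_def)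
  show "\<phi> a = 0" by fact
  fix v assume "v \<in> contr_map a b ` V"
  then obtain x where "x \<in> V" "v = contr_map a b x" by blast
  then have "v \<noteq> b" "v \<noteq> a \<Longrightarrow> v = x" using \<open>a \<noteq> b\<close> by (auto simp: contr_map_def)
  with laplacian_contract[OF assms(1,2) \<open>v \<noteq> b\<close>, of s t L \<phi>] \<open>x \<in> V\<close> away glued
  show "laplacian E (contr_map a b \<circ> s) (contr_map a b \<circ> t) L \<phi> v
      = (if v = contr_map a b p then 1 else 0) - (if v = a then 1 else 0)"
    unfolding \<phi> by (auto simp: contr_map_def)
qed

lemma unit_potential_contract_edge:
  assumes N: "resistor_network V E s t L" and "e \<in> E" "s e \<noteq> t e" "w (s e) \<noteq> 0"
    and g: "unit_potential V (E - {e}) s t L p (s e) g"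
    and w: "unit_potential V (E - {e}) s t L (s e) (t e) w"
  shows "unit_potential (contr_map (s e) (t e) ` V) (E - {e})
           (contr_map (s e) (t e) \<circ> s) (contr_map (s e) (t e) \<circ> t) L
           (contr_map (s e) (t e) p) (s e) (\<lambda>x. g x + g (t e) / w (s e) * (w x - w (s e)))"
proof -
  let ?a = "s e" and ?b = "t e" and ?H = "E - {e}"
  let ?\<psi> = "\<lambda>x. g x + g ?b / w ?a * (w x - w ?a)"
  have "?a \<in> V" "?b \<in> V" "finite ?H" using resistor_networkD[OF N] \<open>e \<in> E\<close> by auto
  have "?\<psi> = (\<lambda>x. 1 * g x + g ?b / w ?a * w x + - (g ?b / w ?a * w ?a))"
    by (simp add: fun_eq_iff right_diff_distrib)
  then have lap: "laplacian ?H s t L ?\<psi> v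
      = laplacian ?H s t L g v + g ?b / w ?a * laplacian ?H s t L w v" for v
    by (simp only: laplacian_affine)
  show ?thesis
  proof (rule unit_potential_contract[OF \<open>finite ?H\<close> \<open>?a \<noteq> ?b\<close>])
    show "?\<psi> ?a = 0" "?\<psi> ?b = 0"
      using g w \<open>w ?a \<noteq> 0\<close> unfolding unit_potential_def by auto
    show "laplacian ?H s t L ?\<psi> v = (if v = p then 1 else 0)" if "v \<in> V" "v \<noteq> ?a" "v \<noteq> ?b" for v
      using g w that unfolding lap unit_potential_def by simp
    show "laplacian ?H s t L ?\<psi> ?a + laplacian ?H s t L ?\<psi> ?b = (if p = ?a \<or> p = ?b then 1 else 0) - 1"
      using g w \<open>?a \<in> V\<close> \<open>?b \<in> V\<close> \<open>?a \<noteq> ?b\<close> unfolding lap unit_potential_def by auto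
  qed
qed

lemma laplacian_pullback_contract:
  assumes "finite E" "a \<noteq> b" "a \<in> V"
    and \<psi>: "unit_potential (contr_map a b ` V) E (contr_map a b \<circ> s) (contr_map a b \<circ> t) L
            a (contr_map a b p) \<psi>"
  shows "\<And>v. v \<in> V \<Longrightarrow> v \<noteq> a \<Longrightarrow> v \<noteq> b \<Longrightarrow>
           laplacian E s t L (\<psi> \<circ> contr_map a b) v = - (if v = p then 1 else 0)"
    and "laplacian E s t L (\<psi> \<circ> contr_map a b) a + laplacian E s t L (\<psi> \<circ> contr_map a b) b
           = 1 - (if p = a \<or> p = b then 1 else 0)"
proof -
  let ?c = "contr_map a b"
  have \<psi>_lap: "laplacian E (?c \<circ> s) (?c \<circ> t) L \<psi> v
      = (if v = a then 1 else 0) - (if v = ?c p then 1 else 0)" if "v \<in> ?c ` V" for v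
    using \<psi> that unfolding unit_potential_def by blast
  show "laplacian E s t L (\<psi> \<circ> ?c) v = - (if v = p then 1 else 0)" if "v \<in> V" "v \<noteq> a" "v \<noteq> b" for v
  proof -
    have "?c v = v" "v = ?c p \<longleftrightarrow> v = p" using that by (auto simp: contr_map_def)
    then have "v \<in> ?c ` V" using \<open>v \<in> V\<close> by (metis image_eqI)
    with \<psi>_lap laplacian_contract[OF assms(1,2) \<open>v \<noteq> b\<close>, of s t L \<psi>] that(2) \<open>v = ?c p \<longleftrightarrow> v = p\<close>
    show ?thesis by simp
  qed
  have "?c a = a" "a = ?c p \<longleftrightarrow> p = a \<or> p = b" by (auto simp: contr_map_def)
  then have "a \<in> ?c ` V" using \<open>a \<in> V\<close> by (metis image_eqI)
  with \<psi>_lap laplacian_contract[OF assms(1,2,2), of s t L \<psi>] \<open>a = ?c p \<longleftrightarrow> p = a \<or> p = b\<close>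
  show "laplacian E s t L (\<psi> \<circ> ?c) a + laplacian E s t L (\<psi> \<circ> ?c) b = 1 - (if p = a \<or> p = b then 1 else 0)"
    by simp
qed

text \<open>When \<open>a\<close> and \<open>b\<close> lie in complementary parts \<open>X\<close>, \<open>V - X\<close> that no edge joins, the unit
  current arriving at the glued vertex must all flow through the end \<open>y\<^sub>0\<close> on the side of \<open>p\<close>.\<close>
lemma unit_potential_pullback_contract:
  assumes N: "resistor_network V E s t L" and "a \<noteq> b"
    and X: "X \<subseteq> V" "\<And>e. e \<in> E \<Longrightarrow> s e \<in> X \<longleftrightarrow> t e \<in> X"
    and ends: "x\<^sub>0 \<in> X" "y\<^sub>0 \<in> V - X" "{x\<^sub>0, y\<^sub>0} = {a, b}" and p: "p \<in> V - X"
    and \<psi>: "unit_potential (contr_map a b ` V) E (contr_map a b \<circ> s) (contr_map a b \<circ> t) L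
            a (contr_map a b p) \<psi>"
  shows "unit_potential V E s t L y\<^sub>0 p (\<psi> \<circ> contr_map a b)"
proof -
  let ?lap = "laplacian E s t L (\<psi> \<circ> contr_map a b)"
  have "a \<in> V" using ends X(1) by auto
  note pullback = laplacian_pullback_contract[OF resistor_networkD(2)[OF N] \<open>a \<noteq> b\<close> \<open>a \<in> V\<close> \<psi>]
  have "?lap x\<^sub>0 + (\<Sum>v\<in>X - {x\<^sub>0}. ?lap v) = 0"
    using laplacian_sum_closed[OF N X] ends finite_subset[OF X(1) resistor_networkD(1)[OF N]]
    by (simp add: sum.remove)
  moreover have "?lap v = 0" if "v \<in> X - {x\<^sub>0}" for v
  proof -
    have "v \<in> V" "v \<noteq> a" "v \<noteq> b" "v \<noteq> p"
      using that ends X(1) p by (auto simp: doubleton_eq_iff)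
    then show ?thesis using pullback(1) by simp
  qed
  ultimately have at_x\<^sub>0: "?lap x\<^sub>0 = 0" by simp
  have "x\<^sub>0 \<noteq> y\<^sub>0" "?lap x\<^sub>0 + ?lap y\<^sub>0 = ?lap a + ?lap b" "p = a \<or> p = b \<longleftrightarrow> p = y\<^sub>0"
    using ends p by (auto simp: doubleton_eq_iff)
  with pullback(2) at_x\<^sub>0 have at_y\<^sub>0: "?lap y\<^sub>0 = 1 - (if p = y\<^sub>0 then 1 else 0)" by simp
  show ?thesis
    unfolding unit_potential_def
  proof (intro conjI ballI)
    show "(\<psi> \<circ> contr_map a b) p = 0" using \<psi> unfolding unit_potential_def by simp
    fix v assume "v \<in> V"
    consider "v = x\<^sub>0" | "v = y\<^sub>0" | "v \<noteq> a" "v \<noteq> b" "v \<noteq> y\<^sub>0"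
      using ends by (auto simp: doubleton_eq_iff)
    then show "?lap v = (if v = y\<^sub>0 then 1 else 0) - (if v = p then 1 else 0)"
      using at_x\<^sub>0 at_y\<^sub>0 \<open>x\<^sub>0 \<noteq> y\<^sub>0\<close> ends p pullback(1)[OF \<open>v \<in> V\<close>] by cases auto
  qed
qed

subsection \<open>Effective resistances at the ends of an edge\<close>

lemma eff_res_insert_edge:
  assumes N: "resistor_network V E s t L" and C: "graph_connected V (E - {e}) s t"
    and "e \<in> E" "x \<in> V" "p \<in> V"
    and w: "unit_potential V (E - {e}) s t L (s e) (t e) w"
  shows "eff_res V E s t L x p = eff_res V (E - {e}) s t L x p - (w x - w p)\<^sup>2 / (L e + w (s e))"
proof -
  have NH: "resistor_network V (E - {e}) s t L" by (rule resistor_network_subset[OF N]) blast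
  have CG: "graph_connected V E s t" by (rule graph_connected_mono[OF C]) blast
  have ends: "s e \<in> V" "t e \<in> V" "L e > 0" using resistor_networkD[OF N] \<open>e \<in> E\<close> by auto
  obtain u where u: "unit_potential V (E - {e}) s t L x p u"
    using unit_potential_exists[OF NH C \<open>x \<in> V\<close> \<open>p \<in> V\<close>] by blast
  have "w (s e) \<ge> 0" using unit_potential_source_nonneg[OF NH ends(1,2) w] .
  from unit_potential_insert_edge[OF resistor_networkD(2)[OF N] \<open>e \<in> E\<close> ends(3) this u w]
  have "eff_res V E s t L x p = u x - (u (s e) - u (t e)) / (L e + w (s e)) * (w x - w p)"
    by (rule eff_res_eq[OF N CG \<open>x \<in> V\<close> \<open>p \<in> V\<close>])
  moreover have "u (s e) - u (t e) = w x - w p"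
    using unit_potential_reciprocity[OF NH \<open>x \<in> V\<close> \<open>p \<in> V\<close> ends(1,2) u w] by simp
  moreover have "eff_res V (E - {e}) s t L x p = u x"
    by (rule eff_res_eq[OF NH C \<open>x \<in> V\<close> \<open>p \<in> V\<close> u])
  ultimately show ?thesis by (simp add: power2_eq_square)
qed

lemma eff_res_other_end:
  assumes N: "resistor_network V E s t L" and C: "graph_connected V E s t"
    and "a \<in> V" "b \<in> V" "p \<in> V" and w: "unit_potential V E s t L a b w"
  shows "eff_res V E s t L b p = eff_res V E s t L a p - w a + 2 * w p"
proof -
  obtain u where u: "unit_potential V E s t L a p u"
    using unit_potential_exists[OF N C \<open>a \<in> V\<close> \<open>p \<in> V\<close>] by blast
  obtain u' where u': "unit_potential V E s t L b p u'"
    using unit_potential_exists[OF N C \<open>b \<in> V\<close> \<open>p \<in> V\<close>] by blast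
  have "w a - w p = u a - u b"
    using unit_potential_reciprocity[OF N assms(3,5,3,4) u w] .
  moreover have "w b - w p = u' a - u' b"
    using unit_potential_reciprocity[OF N assms(4,5,3,4) u' w] .
  moreover have "u b - u p = u' a - u' p"
    using unit_potential_reciprocity[OF N assms(4,5,3,5) u' u] .
  moreover have "eff_res V E s t L a p = u a" "eff_res V E s t L b p = u' b"
    using eff_res_eq[OF N C _ \<open>p \<in> V\<close>] u u' assms(3,4) by blast+
  ultimately show ?thesis using u u' w unfolding unit_potential_def by simp
qed

lemma eff_res_contract_edge:
  assumes N: "resistor_network V E s t L" and C: "graph_connected V (E - {e}) s t"
    and "e \<in> E" "s e \<noteq> t e" "p \<in> V"
    and w: "unit_potential V (E - {e}) s t L (s e) (t e) w"
  defines "c \<equiv> contr_map (s e) (t e)"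
  shows "eff_res (c ` V) (E - {e}) (c \<circ> s) (c \<circ> t) L (c p) (s e)
       = eff_res V (E - {e}) s t L (s e) p - (w (s e) - w p)\<^sup>2 / w (s e)"
proof -
  let ?a = "s e" and ?b = "t e" and ?H = "E - {e}"
  have NH: "resistor_network V ?H s t L" by (rule resistor_network_subset[OF N]) blast
  have ends: "?a \<in> V" "?b \<in> V" using resistor_networkD[OF N] \<open>e \<in> E\<close> by auto
  obtain g where g: "unit_potential V ?H s t L p ?a g"
    using unit_potential_exists[OF NH C \<open>p \<in> V\<close> ends(1)] by blast
  have "w ?a > 0" by (rule unit_potential_source_pos[OF NH ends \<open>?a \<noteq> ?b\<close> w])
  then have \<psi>: "unit_potential (c ` V) ?H (c \<circ> s) (c \<circ> t) L (c p) ?a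
                 (\<lambda>x. g x + g ?b / w ?a * (w x - w ?a))"
    unfolding c_def by (intro unit_potential_contract_edge[OF N \<open>e \<in> E\<close> \<open>?a \<noteq> ?b\<close> _ g w]) simp
  have images: "?a \<in> c ` V" "c p \<in> c ` V"
    using ends \<open>p \<in> V\<close> image_eqI[of ?a c ?a V] unfolding c_def contr_map_def by auto
  have CH: "graph_connected (c ` V) ?H (c \<circ> s) (c \<circ> t)"
    unfolding c_def by (rule graph_connected_contract[OF graph_connected_mono[OF C] \<open>e \<in> E\<close>]) blast
  have NH': "resistor_network (c ` V) ?H (c \<circ> s) (c \<circ> t) L"
    unfolding c_def by (rule resistor_network_contract[OF NH])
  have "eff_res (c ` V) ?H (c \<circ> s) (c \<circ> t) L (c p) ?a = g (c p) + g ?b / w ?a * (w (c p) - w ?a)"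
    by (rule eff_res_eq[OF NH' CH images(2,1) \<psi>])
  also have "\<dots> = g p + g ?b / w ?a * (w p - w ?a)"
    using g w \<open>w ?a > 0\<close> unfolding c_def contr_map_def unit_potential_def by auto
  also have "g ?b = w ?a - w p"
    using unit_potential_reciprocity[OF NH ends \<open>p \<in> V\<close> ends(1) w g] g
    unfolding unit_potential_def by simp
  also have "g p = eff_res V ?H s t L ?a p"
    using eff_res_eq[OF NH C \<open>p \<in> V\<close> ends(1) g] eff_res_commute[OF NH C \<open>p \<in> V\<close> ends(1)] by simp
  finally have rbar: "eff_res (c ` V) ?H (c \<circ> s) (c \<circ> t) L (c p) ?a
      = eff_res V ?H s t L ?a p + (w ?a - w p) / w ?a * (w p - w ?a)" .
  show ?thesis
    unfolding rbar using \<open>w ?a > 0\<close> by (simp add: power2_eq_square field_simps)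
qed

lemma edge_ends_identity:
  fixes A R q l :: real
  assumes "R > 0" "l > 0"
  shows "(A - (R - q)\<^sup>2 / (l + R)) + (A - R + 2 * q - q\<^sup>2 / (l + R))
       = 2 * (A - (R - q)\<^sup>2 / R) + l * R / (l + R) - 2 * (l * (R - q) * q / (R * (l + R)))"
proof -
  have "inverse (l + R) * (l + R) = 1" "inverse R * R = 1" using assms by auto
  then show ?thesis unfolding divide_inverse inverse_mult_distrib by algebra
qed

lemma eff_res_ends_nonbridge:
  assumes N: "resistor_network V E s t L" and C: "graph_connected V (E - {e}) s t"
    and "e \<in> E" "p \<in> V"
  defines "c \<equiv> contr_map (s e) (t e)" and "R \<equiv> eff_res V (E - {e}) s t L (s e) (t e)"
  shows "eff_res V E s t L (s e) p + eff_res V E s t L (t e) p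
       = 2 * eff_res (c ` V) (E - {e}) (c \<circ> s) (c \<circ> t) L (c p) (s e) + L e * R / (L e + R)
         - 2 * (L e * voltage V (E - {e}) s t L (s e) p (t e) * voltage V (E - {e}) s t L (t e) p (s e)
                / (R * (L e + R)))"
proof -
  let ?a = "s e" and ?b = "t e" and ?H = "E - {e}"
  have NH: "resistor_network V ?H s t L" by (rule resistor_network_subset[OF N]) blast
  have ends: "?a \<in> V" "?b \<in> V" "L e > 0" using resistor_networkD[OF N] \<open>e \<in> E\<close> by auto
  show ?thesis
  proof (cases "?a = ?b")
    case True
    have w: "unit_potential V ?H s t L ?a ?b (\<lambda>_. 0)"
      unfolding True by (rule unit_potential_zero)
    have "R = 0" unfolding R_def by (rule eff_res_eq[OF NH C ends(1,2) w])
    moreover have "eff_res V E s t L ?a p = eff_res V ?H s t L ?a p"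
      using eff_res_insert_edge[OF N C \<open>e \<in> E\<close> ends(1) \<open>p \<in> V\<close> w] by simp
    moreover have "eff_res (c ` V) ?H (c \<circ> s) (c \<circ> t) L (c p) ?a = eff_res V ?H s t L ?a p"
      using eff_res_commute[OF NH C \<open>p \<in> V\<close> ends(1)]
      unfolding c_def True contr_map_same by (simp add: comp_def)
    ultimately show ?thesis using True by simp
  next
    case False
    obtain w where w: "unit_potential V ?H s t L ?a ?b w"
      using unit_potential_exists[OF NH C ends(1,2)] by blast
    have "R = w ?a" unfolding R_def by (rule eff_res_eq[OF NH C ends(1,2) w])
    moreover have "w ?a > 0" by (rule unit_potential_source_pos[OF NH ends(1,2) False w])
    moreover have "voltage V ?H s t L ?b p ?a = w p"
      by (rule voltage_eq[OF NH C ends(2) \<open>p \<in> V\<close> w])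
    moreover have "voltage V ?H s t L ?a p ?b = w ?a - w p"
      by (rule voltage_eq[OF NH C ends(1) \<open>p \<in> V\<close> unit_potential_swap[OF w]])
    moreover have "eff_res V E s t L ?a p = eff_res V ?H s t L ?a p - (w ?a - w p)\<^sup>2 / (L e + w ?a)"
      "eff_res V E s t L ?b p = eff_res V ?H s t L ?b p - (w ?b - w p)\<^sup>2 / (L e + w ?a)"
      using eff_res_insert_edge[OF N C \<open>e \<in> E\<close> _ \<open>p \<in> V\<close> w] ends by auto
    moreover have "eff_res V ?H s t L ?b p = eff_res V ?H s t L ?a p - w ?a + 2 * w p"
      by (rule eff_res_other_end[OF NH C ends(1,2) \<open>p \<in> V\<close> w])
    moreover have "eff_res (c ` V) ?H (c \<circ> s) (c \<circ> t) L (c p) ?a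
        = eff_res V ?H s t L ?a p - (w ?a - w p)\<^sup>2 / w ?a"
      unfolding c_def by (rule eff_res_contract_edge[OF N C \<open>e \<in> E\<close> False \<open>p \<in> V\<close> w])
    moreover have "w ?b = 0" using w unfolding unit_potential_def by simp
    ultimately show ?thesis using edge_ends_identity[OF _ ends(3)] by simp
  qed
qed

lemma eff_res_bridge_ends:
  assumes N: "resistor_network V E s t L" and C: "graph_connected V E s t" and "e \<in> E"
    and X: "X \<subseteq> V" "\<And>e'. e' \<in> E - {e} \<Longrightarrow> s e' \<in> X \<longleftrightarrow> t e' \<in> X"
    and ends: "x\<^sub>0 \<in> X" "y\<^sub>0 \<in> V - X" "{x\<^sub>0, y\<^sub>0} = {s e, t e}" and p: "p \<in> V - X"
  defines "c \<equiv> contr_map (s e) (t e)"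
  shows "eff_res V E s t L y\<^sub>0 p = eff_res (c ` V) (E - {e}) (c \<circ> s) (c \<circ> t) L (c p) (s e)"
    and "eff_res V E s t L x\<^sub>0 p = eff_res (c ` V) (E - {e}) (c \<circ> s) (c \<circ> t) L (c p) (s e) + L e"
proof -
  let ?a = "s e" and ?b = "t e" and ?H = "E - {e}"
  have "?a \<noteq> ?b" using ends by (auto simp: doubleton_eq_iff)
  have fin: "finite E" and "L e > 0" using resistor_networkD[OF N] \<open>e \<in> E\<close> by auto
  have NH: "resistor_network V ?H s t L" by (rule resistor_network_subset[OF N]) blast
  have NH': "resistor_network (c ` V) ?H (c \<circ> s) (c \<circ> t) L"
    unfolding c_def by (rule resistor_network_contract[OF NH])
  have CH': "graph_connected (c ` V) ?H (c \<circ> s) (c \<circ> t)"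
    unfolding c_def by (rule graph_connected_contract[OF C \<open>e \<in> E\<close>])
  have images: "?a \<in> c ` V" "c p \<in> c ` V" "c x\<^sub>0 = ?a" "c y\<^sub>0 = ?a"
    using ends X(1) p image_eqI[of ?a c ?a V]
    unfolding c_def contr_map_def by (auto simp: doubleton_eq_iff)
  obtain \<psi> where \<psi>: "unit_potential (c ` V) ?H (c \<circ> s) (c \<circ> t) L ?a (c p) \<psi>"
    using unit_potential_exists[OF NH' CH' images(1,2)] by blast
  have rbar: "eff_res (c ` V) ?H (c \<circ> s) (c \<circ> t) L (c p) ?a = \<psi> ?a"
    using eff_res_commute[OF NH' CH' images(1,2)] eff_res_eq[OF NH' CH' images(1,2) \<psi>] by simp
  have pull: "unit_potential V ?H s t L y\<^sub>0 p (\<psi> \<circ> c)"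
    unfolding c_def by (rule unit_potential_pullback_contract[OF NH \<open>?a \<noteq> ?b\<close> X ends p \<psi>[unfolded c_def]])
  have equal: "(\<psi> \<circ> c) ?a = (\<psi> \<circ> c) ?b" unfolding c_def contr_map_def by simp
  have y\<^sub>0_pot: "unit_potential V E s t L y\<^sub>0 p (\<psi> \<circ> c)"
    by (rule unit_potential_insert_edge_equal_ends[OF fin \<open>e \<in> E\<close> equal pull])
  then show "eff_res V E s t L y\<^sub>0 p = eff_res (c ` V) ?H (c \<circ> s) (c \<circ> t) L (c p) ?a"
    using eff_res_eq[OF N C _ _ y\<^sub>0_pot] ends p rbar images by simp
  have x\<^sub>0_pot: "unit_potential V E s t L x\<^sub>0 p (\<lambda>x. (\<psi> \<circ> c) x + L e * of_bool (x \<in> X))"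
    using ends p
    by (intro unit_potential_shift_across_bridge[OF fin \<open>e \<in> E\<close> \<open>L e > 0\<close> X(2) ends(1) _ ends(3) _ pull equal])
       auto
  then show "eff_res V E s t L x\<^sub>0 p = eff_res (c ` V) ?H (c \<circ> s) (c \<circ> t) L (c p) ?a + L e"
    using eff_res_eq[OF N C _ _ x\<^sub>0_pot] ends X(1) p rbar images by auto
qed

lemma eff_res_ends_bridge:
  assumes N: "resistor_network V E s t L" and C: "graph_connected V E s t" and "e \<in> E" "p \<in> V"
    and bridge: "\<not> graph_connected V (E - {e}) s t"
  defines "c \<equiv> contr_map (s e) (t e)"
  shows "eff_res V E s t L (s e) p + eff_res V E s t L (t e) p
       = 2 * eff_res (c ` V) (E - {e}) (c \<circ> s) (c \<circ> t) L (c p) (s e) + L e"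
proof -
  let ?R = "(adj (E - {e}) s t)\<^sup>*"
  have split: "(s e, t e) \<notin> ?R" using graph_connected_remove_edge[OF C \<open>e \<in> E\<close>] bridge by blast
  obtain x\<^sub>0 y\<^sub>0 where xy: "{x\<^sub>0, y\<^sub>0} = {s e, t e}" and "(x\<^sub>0, p) \<notin> ?R"
  proof (cases "(s e, p) \<in> ?R")
    case True
    then have "(t e, p) \<notin> ?R" using split rtrancl_adj_commute rtrancl_trans by metis
    then show ?thesis using that[of "t e" "s e"] by auto
  qed (use that in auto)
  define X where "X = {v \<in> V. (x\<^sub>0, v) \<in> ?R}"
  have "x\<^sub>0 \<in> V" "y\<^sub>0 \<in> V" using xy resistor_networkD(3,4)[OF N \<open>e \<in> E\<close>] by (auto simp: doubleton_eq_iff)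
  have "(x\<^sub>0, y\<^sub>0) \<notin> ?R"
    using split xy rtrancl_adj_commute[of "t e" "s e"] by (auto simp: doubleton_eq_iff)
  then have ends: "x\<^sub>0 \<in> X" "y\<^sub>0 \<in> V - X" "p \<in> V - X"
    using \<open>x\<^sub>0 \<in> V\<close> \<open>y\<^sub>0 \<in> V\<close> \<open>p \<in> V\<close> \<open>(x\<^sub>0, p) \<notin> ?R\<close> unfolding X_def by auto
  have closed: "s e' \<in> X \<longleftrightarrow> t e' \<in> X" if "e' \<in> E - {e}" for e'
    using rtrancl_adj_ends_iff[OF that, of x\<^sub>0] resistor_networkD(3,4)[OF N] that unfolding X_def by auto
  have "eff_res V E s t L y\<^sub>0 p = eff_res (c ` V) (E - {e}) (c \<circ> s) (c \<circ> t) L (c p) (s e)"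
    "eff_res V E s t L x\<^sub>0 p = eff_res (c ` V) (E - {e}) (c \<circ> s) (c \<circ> t) L (c p) (s e) + L e"
    unfolding c_def using eff_res_bridge_ends[OF N C \<open>e \<in> E\<close> _ closed ends(1,2) xy ends(3)] X_def by auto
  with xy show ?thesis by (auto simp: doubleton_eq_iff)
qed

lemma tendsto_parallel_resistance_at_top:
  "(l::real) > 0 \<Longrightarrow> ((\<lambda>R. c + l * R / (l + R)) \<longlongrightarrow> c + l) at_top"
  by real_asymp

theorem lemma3p1:
  fixes V :: "'v set" and E :: "'e set" and s t :: "'e \<Rightarrow> 'v"
    and L :: "'e \<Rightarrow> real" and p :: 'v and ei :: 'e
  assumes G: "metrized_graph V E s t L" and pV: "p \<in> V" and eE: "ei \<in> E"
  shows
   "let pi = s ei; qi = t ei;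
        r = eff_res V E s t L;
        Vbar = contr_map pi qi ` V;
        sbar = contr_map pi qi \<circ> s; tbar = contr_map pi qi \<circ> t;
        rbar = eff_res Vbar (E - {ei}) sbar tbar L;
        Li = L ei;
        lhs = r pi p + r qi p
    in (graph_connected V (E - {ei}) s t \<longrightarrow>
          (let Ri = eff_res V (E - {ei}) s t L pi qi;
               Ra = voltage V (E - {ei}) s t L pi p qi;
               Rb = voltage V (E - {ei}) s t L qi p pi
           in lhs = 2 * rbar (contr_map pi qi p) pi + Li * Ri / (Li + Ri)
                      - 2 * (Li * Ra * Rb / (Ri * (Li + Ri)))))
     \<and> (\<not> graph_connected V (E - {ei}) s t \<longrightarrow>
          ((\<lambda>Ri. let Ra = (if (pi, p) \<in> (adj (E - {ei}) s t)\<^sup>* then 0 else Ri);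
                      Rb = (if (pi, p) \<in> (adj (E - {ei}) s t)\<^sup>* then Ri else 0)
                  in 2 * rbar (contr_map pi qi p) pi + Li * Ri / (Li + Ri)
                      - 2 * (Li * Ra * Rb / (Ri * (Li + Ri))))
            \<longlongrightarrow> lhs) at_top)"
proof -
  have N: "resistor_network V E s t L" and C: "graph_connected V E s t"
    using G unfolding metrized_graph_def resistor_network_def by auto
  have "L ei > 0" using resistor_networkD(5)[OF N eE] .
  show ?thesis
    unfolding Let_def
    apply (intro conjI impI)
    subgoal by (rule eff_res_ends_nonbridge[OF N _ eE pV])
    subgoal premises bridge
      unfolding eff_res_ends_bridge[OF N C eE pV bridge]
      using tendsto_parallel_resistance_at_top[OF \<open>L ei > 0\<close>]
      by (cases "(s ei, p) \<in> (adj (E - {ei}) s t)\<^sup>*") simp_all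
    done
qed

end
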